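(* Let $M$ be a finite monoid. The map sending a two-sided idempotent ideal $I$ of $M$ to the set of $\mathfrak I$-classes of idempotents lying in $I$ is a bijection $\mathscr{II}(M)\to\mathsf{Open}(\mathsf{Idem}_{\mathfrak I}(M))$, where $\mathsf{Idem}_{\mathfrak I}(M)$ carries the order topology of the order $\le_{\mathfrak I}$. Via $\mathsf F_M\cong\mathsf{Idem}_{\mathfrak I}(M)$ this gives a bijection between $\mathscr{II}(M)$ (hence between localising subcategories of the topos of right $M$-sets) and the open subsets of $\mathsf F_M$.
   Context: A two-sided ideal $I$ (possibly empty) is idempotent if $I=I^2=\{xy\mid x,y\in I\}$; $\mathscr{II}(M)$ is the set of these. For idempotents $e,f$: $e\,\mathfrak I\,f$ iff $MeM=MfM$, and $\mathsf{Idem}_{\mathfrak I}(M)$ is the set of $\mathfrak I$-classes of idempotents, partially ordered by $[e]\le_{\mathfrak I}[f]$ iff $MeM\subseteq MfM$. For a poset $P$, the order topology has as open sets the subsets $S\subseteq P$ such that $y\in S$ and $x\le y$ imply $x\in S$; $\mathsf{Open}(P)$ is the set of open subsets. $\mathsf F_M$ is the set of isomorphism classes of points of the topos of right $M$-sets, which is in bijection with $\mathsf{Idem}_{\mathfrak I}(M)$ via $[Me]\leftrightarrow[e]$. *)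

theory Defs
  imports Main
begin

text \<open>The monoid M is the universe of a type of class monoid_mult.\<close>

definition two_sided_ideal :: "'a::monoid_mult set \<Rightarrow> bool" where
  "two_sided_ideal I \<longleftrightarrow> (\<forall>x\<in>I. \<forall>m. m * x \<in> I \<and> x * m \<in> I)"

definition idempotent_ideals :: "'a::monoid_mult set set" where
  "idempotent_ideals = {I. two_sided_ideal I \<and> I = {x * y | x y. x \<in> I \<and> y \<in> I}}"

definition idem :: "'a::monoid_mult \<Rightarrow> bool" where
  "idem e \<longleftrightarrow> e * e = e"

definition MxM :: "'a::monoid_mult \<Rightarrow> 'a set" where
  "MxM e = {m * e * n | m n. True}"

definition Jclass :: "'a::monoid_mult \<Rightarrow> 'a set" where
  "Jclass e = {f. idem f \<and> MxM f = MxM e}"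

definition Idem_J :: "'a::monoid_mult set set" where
  "Idem_J = {Jclass e | e. idem e}"

definition le_J :: "'a::monoid_mult set \<Rightarrow> 'a set \<Rightarrow> bool" where
  "le_J X Y \<longleftrightarrow> (\<exists>e f. idem e \<and> idem f \<and> X = Jclass e \<and> Y = Jclass f \<and> MxM e \<subseteq> MxM f)"

text \<open>Open sets of the order topology: down-closed subsets.\<close>
definition Open_order :: "'b set \<Rightarrow> ('b \<Rightarrow> 'b \<Rightarrow> bool) \<Rightarrow> 'b set set" where
  "Open_order P le = {S. S \<subseteq> P \<and> (\<forall>y\<in>S. \<forall>x\<in>P. le x y \<longrightarrow> x \<in> S)}"

definition idem_classes_in :: "'a::monoid_mult set \<Rightarrow> 'a set set" where
  "idem_classes_in I = {Jclass e | e. idem e \<and> e \<in> I}"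

end

theory Submission
  imports Defs
begin

text \<open>An idempotent ideal \<open>I\<close> of a finite monoid is the union of the principal ideals \<open>MeM\<close>
  over the idempotents \<open>e \<in> I\<close>. Indeed, since \<open>I = I\<^sup>n\<close>, any \<open>x \<in> I\<close> is a product
  \<open>x\<^sub>1 \<cdots> x\<^sub>n\<close> of elements of \<open>I\<close> with \<open>n > |M|\<close>; two prefixes \<open>p = x\<^sub>1 \<cdots> x\<^sub>i\<close> and
  \<open>x\<^sub>1 \<cdots> x\<^sub>j\<close> with \<open>i < j\<close> coincide, so \<open>p = p q\<close> for \<open>q = x\<^sub>i\<^sub>+\<^sub>1 \<cdots> x\<^sub>j \<in> I\<close>, hence
  \<open>p = p e\<close> for the idempotent power \<open>e\<close> of \<open>q\<close>, and \<open>x \<in> MeM\<close>. So \<open>I\<close> is determined by its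
  idempotents, whose \<open>\<J>\<close>-classes form a down-closed set. Conversely, for a down-closed set \<open>S\<close>
  of classes, the union of the \<open>MeM\<close> with \<open>[e] \<in> S\<close> is idempotent because \<open>MeM = MeM \<cdot> MeM\<close>,
  and its idempotent classes are exactly \<open>S\<close>.\<close>

lemma finite_codomain_pigeonhole:
  fixes f :: "nat \<Rightarrow> 'a::finite"
  obtains i j where "i < j" "j \<le> card (UNIV :: 'a set)" "f i = f j"
proof -
  have "card (f ` {0..card (UNIV :: 'a set)}) < card {0..card (UNIV :: 'a set)}"
    using card_mono[of UNIV "f ` {0..card (UNIV :: 'a set)}"] by simp
  then have "\<not> inj_on f {0..card (UNIV :: 'a set)}"
    by (rule pigeonhole)
  then obtain i j where "i \<le> card (UNIV :: 'a set)" "j \<le> card (UNIV :: 'a set)" "i \<noteq> j" "f i = f j"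
    unfolding inj_on_def by auto
  then show thesis
    using that by (metis linorder_neqE_nat)
qed

lemma power_periodic:
  fixes q :: "'a::monoid_mult"
  assumes "q ^ (s + p) = q ^ s" and "s \<le> c"
  shows "q ^ (c + t * p) = q ^ c"
proof (induction t)
  case (Suc t)
  have shift: "q ^ (c' + p) = q ^ c'" if "s \<le> c'" for c'
    using that assms(1) by (metis le_add_diff_inverse2 power_add add.assoc)
  have "q ^ (c + Suc t * p) = q ^ ((c + t * p) + p)"
    by (simp add: algebra_simps)
  also have "\<dots> = q ^ (c + t * p)"
    using shift assms(2) by simp
  finally show ?case
    using Suc.IH by simp
qed simp

lemma exists_idem_power:
  fixes q :: "'a::{monoid_mult,finite}"
  obtains k where "k \<ge> 1" "idem (q ^ k)"
proof -
  obtain a b where "a < b" "q ^ Suc a = q ^ Suc b"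
    using finite_codomain_pigeonhole[of "\<lambda>n. q ^ Suc n"] by blast
  then have period: "q ^ (Suc a + (b - a)) = q ^ Suc a"
    by simp
  define k where "k = Suc a * (b - a)"
  have "1 \<le> b - a"
    using \<open>a < b\<close> by simp
  then have "Suc a \<le> k"
    unfolding k_def using mult_le_mono2[of 1 "b - a" "Suc a"] by simp
  then have "q ^ k * q ^ k = q ^ k"
    using power_periodic[OF period, of k "Suc a"] by (simp add: power_add[symmetric] k_def)
  moreover have "k \<ge> 1"
    using \<open>Suc a \<le> k\<close> by simp
  ultimately show thesis
    using that unfolding idem_def by blast
qed

lemma prod_list_in_two_sided_ideal:
  assumes "two_sided_ideal I" and "xs \<noteq> []" and "set xs \<subseteq> I"
  shows "prod_list xs \<in> I"
  using assms(2,3)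
  by (induction xs) (use assms(1) in \<open>auto simp: two_sided_ideal_def\<close>)

lemma idempotent_ideal_prod_list:
  assumes "I \<in> idempotent_ideals" and "x \<in> I"
  obtains xs where "length xs = Suc n" "set xs \<subseteq> I" "x = prod_list xs"
proof -
  have "\<exists>xs. length xs = Suc n \<and> set xs \<subseteq> I \<and> x = prod_list xs"
    using assms(2)
  proof (induction n arbitrary: x)
    case 0
    then show ?case
      by (intro exI[of _ "[x]"]) simp
  next
    case (Suc n)
    obtain a y where "a \<in> I" "y \<in> I" "x = a * y"
      using assms(1) Suc.prems unfolding idempotent_ideals_def by blast
    then show ?case
      using Suc.IH[of y] by (metis length_Cons insert_subset list.simps(15) prod_list.Cons)
  qed
  then show thesis
    using that by blast
qed

lemma mem_MxM_self: "x \<in> MxM x"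
  unfolding MxM_def by (auto intro!: exI[of _ 1])

lemma MxM_subset_ideal: "two_sided_ideal I \<Longrightarrow> e \<in> I \<Longrightarrow> MxM e \<subseteq> I"
  unfolding MxM_def two_sided_ideal_def by auto

lemma MxM_subset_MxM: "x \<in> MxM e \<Longrightarrow> MxM x \<subseteq> MxM e"
  unfolding MxM_def by clarsimp (metis mult.assoc)

lemma idempotent_ideal_mem_MxM_idem:
  fixes I :: "'a::{monoid_mult,finite} set"
  assumes "I \<in> idempotent_ideals" and "x \<in> I"
  obtains e where "idem e" "e \<in> I" "x \<in> MxM e"
proof -
  have ideal: "two_sided_ideal I"
    using assms(1) unfolding idempotent_ideals_def by blast
  obtain xs where xs: "length xs = Suc (card (UNIV :: 'a set))" "set xs \<subseteq> I" "x = prod_list xs"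
    using idempotent_ideal_prod_list[OF assms] by blast
  obtain i j where ij: "i < j" "j \<le> card (UNIV :: 'a set)" "prod_list (take i xs) = prod_list (take j xs)"
    using finite_codomain_pigeonhole[of "\<lambda>i. prod_list (take i xs)"] by blast
  define p where "p = prod_list (take i xs)"
  define q where "q = prod_list (drop i (take j xs))"
  have "take j xs = take i xs @ drop i (take j xs)"
    using ij(1) by (metis append_take_drop_id min.strict_order_iff take_take)
  then have "p * q = p"
    using ij(3) by (metis p_def q_def prod_list.append)
  then have p_absorbs: "p * q ^ k = p" for k
    by (induction k) (simp_all add: mult.assoc[symmetric])
  have "q \<in> I"
    unfolding q_def using ij xs(1,2)
    by (intro prod_list_in_two_sided_ideal[OF ideal])
      (auto dest: in_set_dropD in_set_takeD)
  obtain k where k: "k \<ge> 1" "idem (q ^ k)"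
    using exists_idem_power by blast
  have "q ^ k \<in> I"
    using prod_list_in_two_sided_ideal[OF ideal, of "replicate k q"] \<open>q \<in> I\<close> k(1) by simp
  have "x = prod_list (take j xs) * prod_list (drop j xs)"
    using xs(3) by (metis append_take_drop_id prod_list.append)
  also have "\<dots> = p * q ^ k * prod_list (drop j xs)"
    using ij(3) p_absorbs by (simp add: p_def)
  finally have "x \<in> MxM (q ^ k)"
    unfolding MxM_def by blast
  then show thesis
    using that k(2) \<open>q ^ k \<in> I\<close> by blast
qed

lemma Jclass_eq_iff: "idem e \<Longrightarrow> idem f \<Longrightarrow> Jclass e = Jclass f \<longleftrightarrow> MxM e = MxM f"
  unfolding Jclass_def by blast

lemma le_J_Jclass_iff:
  "idem e \<Longrightarrow> idem f \<Longrightarrow> le_J (Jclass e) (Jclass f) \<longleftrightarrow> MxM e \<subseteq> MxM f"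
  unfolding le_J_def by (metis Jclass_eq_iff)

lemma Jclass_mem_idem_classes_in_iff:
  assumes "two_sided_ideal I" and "idem e"
  shows "Jclass e \<in> idem_classes_in I \<longleftrightarrow> e \<in> I"
proof
  assume "Jclass e \<in> idem_classes_in I"
  then obtain f where "idem f" "f \<in> I" "MxM e = MxM f"
    using assms(2) Jclass_eq_iff unfolding idem_classes_in_def by blast
  then show "e \<in> I"
    using MxM_subset_ideal[OF assms(1)] mem_MxM_self by blast
qed (use assms(2) in \<open>auto simp: idem_classes_in_def\<close>)

lemma idem_classes_in_open:
  assumes "two_sided_ideal I"
  shows "idem_classes_in I \<in> Open_order Idem_J le_J"
proof -
  have "X \<in> idem_classes_in I" if "Y \<in> idem_classes_in I" "X \<in> Idem_J" "le_J X Y" for X Y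
  proof -
    obtain f where f: "idem f" "f \<in> I" "Y = Jclass f"
      using \<open>Y \<in> idem_classes_in I\<close> unfolding idem_classes_in_def by blast
    obtain e where e: "idem e" "X = Jclass e"
      using \<open>X \<in> Idem_J\<close> unfolding Idem_J_def by blast
    have "e \<in> MxM f"
      using \<open>le_J X Y\<close> e f le_J_Jclass_iff mem_MxM_self by blast
    then show ?thesis
      using Jclass_mem_idem_classes_in_iff[OF assms] MxM_subset_ideal[OF assms] e f by blast
  qed
  moreover have "idem_classes_in I \<subseteq> Idem_J"
    unfolding idem_classes_in_def Idem_J_def by blast
  ultimately show ?thesis
    unfolding Open_order_def by blast
qed

definition ideal_of_classes :: "'a::monoid_mult set set \<Rightarrow> 'a set" where
  "ideal_of_classes S = (\<Union>e \<in> {e. idem e \<and> Jclass e \<in> S}. MxM e)"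

lemma ideal_of_classes_idempotent: "ideal_of_classes S \<in> idempotent_ideals"
proof -
  let ?I = "ideal_of_classes S"
  have ideal: "two_sided_ideal ?I"
    unfolding two_sided_ideal_def ideal_of_classes_def MxM_def by clarsimp (metis mult.assoc)
  have "z \<in> {x * y | x y. x \<in> ?I \<and> y \<in> ?I}" if "z \<in> ?I" for z
  proof -
    obtain e m n where e: "idem e" "Jclass e \<in> S" "z = m * e * n"
      using \<open>z \<in> ?I\<close> unfolding ideal_of_classes_def MxM_def by blast
    then have "z = (m * e) * (e * n)"
      unfolding idem_def by (metis mult.assoc)
    moreover have "m * e \<in> MxM e"
      unfolding MxM_def by (metis (mono_tags, lifting) mem_Collect_eq mult_1_right)
    moreover have "e * n \<in> MxM e"
      unfolding MxM_def by (metis (mono_tags, lifting) mem_Collect_eq mult_1_left)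
    ultimately show ?thesis
      using e unfolding ideal_of_classes_def by blast
  qed
  moreover have "{x * y | x y. x \<in> ?I \<and> y \<in> ?I} \<subseteq> ?I"
    using ideal unfolding two_sided_ideal_def by blast
  ultimately show ?thesis
    using ideal unfolding idempotent_ideals_def by blast
qed

lemma ideal_of_classes_idem_classes_in:
  fixes I :: "'a::{monoid_mult,finite} set"
  assumes "I \<in> idempotent_ideals"
  shows "ideal_of_classes (idem_classes_in I) = I"
proof -
  have ideal: "two_sided_ideal I"
    using assms unfolding idempotent_ideals_def by blast
  have "ideal_of_classes (idem_classes_in I) = (\<Union>e \<in> {e. idem e \<and> e \<in> I}. MxM e)"
    unfolding ideal_of_classes_def using Jclass_mem_idem_classes_in_iff[OF ideal] by blast
  also have "\<dots> = I"
    using MxM_subset_ideal[OF ideal] idempotent_ideal_mem_MxM_idem[OF assms] by blast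
  finally show ?thesis .
qed

lemma idem_classes_in_ideal_of_classes:
  assumes "S \<in> Open_order Idem_J le_J"
  shows "idem_classes_in (ideal_of_classes S) = S"
proof
  show "idem_classes_in (ideal_of_classes S) \<subseteq> S"
  proof
    fix X assume "X \<in> idem_classes_in (ideal_of_classes S)"
    then obtain f e where "idem f" "X = Jclass f" "idem e" "Jclass e \<in> S" "f \<in> MxM e"
      unfolding idem_classes_in_def ideal_of_classes_def by blast
    moreover from this have "le_J (Jclass f) (Jclass e)" "Jclass f \<in> Idem_J"
      using le_J_Jclass_iff MxM_subset_MxM unfolding Idem_J_def by blast+
    ultimately show "X \<in> S"
      using assms unfolding Open_order_def by blast
  qed
next
  show "S \<subseteq> idem_classes_in (ideal_of_classes S)"
    using assms mem_MxM_self
    unfolding Open_order_def Idem_J_def idem_classes_in_def ideal_of_classes_def by blast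
qed

theorem proposition4p10:
  shows "bij_betw (idem_classes_in :: ('a::{monoid_mult,finite}) set \<Rightarrow> 'a set set)
           idempotent_ideals (Open_order Idem_J le_J)"
proof (rule bij_betw_byWitness[where f' = ideal_of_classes])
  show "\<forall>I \<in> idempotent_ideals. ideal_of_classes (idem_classes_in I) = (I :: 'a set)"
    using ideal_of_classes_idem_classes_in by blast
  show "\<forall>S \<in> Open_order Idem_J le_J. idem_classes_in (ideal_of_classes S) = (S :: 'a set set)"
    using idem_classes_in_ideal_of_classes by blast
  show "idem_classes_in ` idempotent_ideals \<subseteq> Open_order Idem_J (le_J :: 'a set \<Rightarrow> _)"
    using idem_classes_in_open unfolding idempotent_ideals_def by blast
  show "ideal_of_classes ` Open_order Idem_J le_J \<subseteq> (idempotent_ideals :: 'a set set)"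
    using ideal_of_classes_idempotent by blast
qed

end
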